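(* Let $\kappa>0$ be a cardinal, $K$ a field, and $R$ the $K$-algebra $K^\kappa$ (direct product of $\kappa$ copies of $K$). If $\kappa$ is finite, then $R$ has a strong multiplicative basis; if $\kappa$ is infinite, then $R$ has no bounded basis.
   Context: Let $B$ be a $K$-linear basis of a $K$-algebra $R$. For $r\in R$ write $r=\sum_{b\in B} b k_b$ and let $\mathrm{supp}(r)=\{b\mid k_b\neq 0\}$, $\mathrm{cs}(r)=|\mathrm{supp}(r)|$. For $1\le k<\omega$, $B$ is $k$-bounded if $\mathrm{cs}(bb')\le k$ for all $b,b'\in B$; $B$ is bounded if it is $k$-bounded for some $1 \le k<\omega$. $B$ is a strong multiplicative basis if $bb'\in B$ for all $b,b'\in B$. *)

theory Defs
  imports Complex_Main "HOL-Library.Function_Algebras"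
begin

text \<open>The K-algebra R = K^kappa is modelled as the type of functions from an index
type 'i (kappa = |'i|, automatically > 0) to the field 'k, with pointwise operations.\<close>

definition fscale :: "'k::field \<Rightarrow> ('i \<Rightarrow> 'k) \<Rightarrow> ('i \<Rightarrow> 'k)" where
  "fscale c f = (\<lambda>i. c * f i)"

definition fmult :: "('i \<Rightarrow> 'k::field) \<Rightarrow> ('i \<Rightarrow> 'k) \<Rightarrow> ('i \<Rightarrow> 'k)" where
  "fmult f g = (\<lambda>i. f i * g i)"

lemma vector_space_fscale: "vector_space (fscale :: 'k::field \<Rightarrow> ('i \<Rightarrow> 'k) \<Rightarrow> _)"
  by unfold_locales (auto simp: fscale_def algebra_simps fun_eq_iff)

definition is_basis :: "('i \<Rightarrow> 'k::field) set \<Rightarrow> bool" where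
  "is_basis B \<longleftrightarrow> \<not> module.dependent fscale B \<and> module.span fscale B = UNIV"

definition supp :: "('i \<Rightarrow> 'k::field) set \<Rightarrow> ('i \<Rightarrow> 'k) \<Rightarrow> ('i \<Rightarrow> 'k) set" where
  "supp B r = {b \<in> B. module.representation fscale B r b \<noteq> 0}"

definition cs :: "('i \<Rightarrow> 'k::field) set \<Rightarrow> ('i \<Rightarrow> 'k) \<Rightarrow> nat" where
  "cs B r = card (supp B r)"

definition k_bounded :: "nat \<Rightarrow> ('i \<Rightarrow> 'k::field) set \<Rightarrow> bool" where
  "k_bounded k B \<longleftrightarrow> (\<forall>b\<in>B. \<forall>b'\<in>B. cs B (fmult b b') \<le> k)"

definition bounded_basis :: "('i \<Rightarrow> 'k::field) set \<Rightarrow> bool" where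
  "bounded_basis B \<longleftrightarrow> is_basis B \<and> (\<exists>k. 1 \<le> k \<and> k_bounded k B)"

definition strong_multiplicative_basis :: "('i \<Rightarrow> 'k::field) set \<Rightarrow> bool" where
  "strong_multiplicative_basis B \<longleftrightarrow> is_basis B \<and> (\<forall>b\<in>B. \<forall>b'\<in>B. fmult b b' \<in> B)"

end

(*
  Finite case: enumerate the index set as i_0, ..., i_(n-1). The indicator functions of the
  initial segments {i_0, ..., i_(m-1)}, 1 <= m <= n, span all point indicators by differences,
  so they form a basis, and the product of two of them is the indicator of the shorter segment.

  Infinite case: if cs(b b') <= k on a basis B, bilinearity gives cs(x y) <= k cs(x) cs(y).
  A subspace all of whose vectors have at most N nonzero B-coordinates has dimension at most N;
  applied to the functions supported on a finite set P, this yields such a function z with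
  cs(z) >= |P|. Split the index set into infinitely many disjoint infinite parts J_n and pick
  y_n supported on J_n with cs(y_n) > n k cs(1_(J_n)). Gluing them to a single function Y gives
  y_n = 1_(J_n) Y, hence cs(y_n) <= k cs(1_(J_n)) cs(Y), which fails for n = cs(Y).
*)
theory Submission
  imports Defs "HOL-Library.Nat_Bijection" "HOL-Library.Indicator_Function"
begin

context vector_space
begin

lemma dim_le_Suc_dim_shift:
  assumes "(\<lambda>x. x - f x *s u) ` W \<subseteq> span T" "finite T"
  shows "dim W \<le> Suc (dim ((\<lambda>x. x - f x *s u) ` W))"
proof -
  let ?W' = "(\<lambda>x. x - f x *s u) ` W"
  obtain A where A: "A \<subseteq> ?W'" "independent A" "?W' \<subseteq> span A" "card A = dim ?W'"
    using basis_exists by blast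
  have "finite A"
    using independent_span_bound[of T A] A assms by auto
  have "W \<subseteq> span (insert u A)"
  proof
    fix w assume "w \<in> W"
    then have "w - f w *s u \<in> span A"
      using A(3) by blast
    then show "w \<in> span (insert u A)"
      unfolding span_breakdown_eq by blast
  qed
  then have "dim W \<le> card (insert u A)"
    using \<open>finite A\<close> by (intro dim_le_card) auto
  also have "\<dots> \<le> Suc (dim ?W')"
    using A(4) \<open>finite A\<close> by (simp add: card_insert_if)
  finally show ?thesis .
qed

lemma dim_linear_image:
  assumes f: "Vector_Spaces.linear scale scale f" and inj: "inj_on f (span W)"
  shows "dim (f ` W) = dim W"
proof -
  interpret f: Vector_Spaces.linear scale scale f by (fact f)
  obtain A where A: "A \<subseteq> W" "independent A" "W \<subseteq> span A" "card A = dim W"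
    using basis_exists by blast
  have span_A: "span A = span W"
    using A(1,3) span_mono span_span by blast
  have "independent (f ` A)"
    using f.independent_injective_image[OF A(2)] inj span_A by simp
  moreover have "f ` W \<subseteq> span (f ` A)"
    using A(3) f.span_image by blast
  ultimately have "card (f ` A) = dim (f ` W)"
    using A(1) by (intro basis_card_eq_dim) auto
  moreover have "card (f ` A) = card A"
    using inj span_A A(1) span_superset by (intro card_image inj_on_subset[OF inj]) auto
  ultimately show ?thesis using A(4) by simp
qed

lemma inj_on_drop_coordinate:
  assumes "subspace W" "u \<notin> W"
  shows "inj_on (\<lambda>x. x - representation B x u *s u) W"
proof
  fix x y
  assume xy: "x \<in> W" "y \<in> W" "x - representation B x u *s u = y - representation B y u *s u"
  define c where "c = representation B x u - representation B y u"
  have "x - y = c *s u"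
    using xy(3) by (simp add: c_def algebra_simps)
  moreover have "x - y \<in> W"
    using assms(1) xy(1,2) by (rule subspace_diff)
  ultimately have "c = 0"
    using assms subspace_scale[OF assms(1), of "x - y" "inverse c"] by (cases "c = 0") auto
  with \<open>x - y = c *s u\<close> show "x = y" by simp
qed

context
  fixes B
  assumes independent_B: "independent B" and span_B: "span B = UNIV"
begin

lemma in_span_iff_representation_support:
  assumes "T \<subseteq> B"
  shows "x \<in> span T \<longleftrightarrow> {b. representation B x b \<noteq> 0} \<subseteq> T"
proof
  assume "x \<in> span T"
  then have "representation B x = representation T x"
    using independent_B assms by (intro representation_extend)
  then show "{b. representation B x b \<noteq> 0} \<subseteq> T"
    using representation_ne_zero[of T x] by auto
next
  assume support: "{b. representation B x b \<noteq> 0} \<subseteq> T"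
  have "x = (\<Sum>b | representation B x b \<noteq> 0. representation B x b *s b)"
    using sum_nonzero_representation_eq[of B x] independent_B span_B by auto
  also have "\<dots> \<in> span T"
    using support by (intro span_sum span_scale span_base) auto
  finally show "x \<in> span T" .
qed

lemma representation_drop_coordinate:
  assumes "u \<in> B"
  shows "representation B (x - representation B x u *s u) = (representation B x)(u := 0)"
  using independent_B span_B assms
  by (simp add: representation_diff representation_scale representation_basis fun_eq_iff)

lemma linear_drop_coordinate:
  "Vector_Spaces.linear scale scale (\<lambda>x. x - representation B x u *s u)"
  unfolding Vector_Spaces.linear_iff
  using independent_B span_B vector_space_axioms
  by (auto simp: representation_add representation_scale scale_left_distrib scale_right_diff_distrib)

lemma drop_coordinate_in_span:
  assumes "T \<subseteq> B" "u \<in> B" "x \<in> span (insert u T)"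
  shows "x - representation B x u *s u \<in> span T"
  using assms in_span_iff_representation_support[of T]
    in_span_iff_representation_support[of "insert u T"]
  by (auto simp: representation_drop_coordinate)

lemma card_support_drop_coordinate_le:
  assumes "u \<in> B"
  shows "card {b. representation B (x - representation B x u *s u) b \<noteq> 0}
    \<le> card {b. representation B x b \<noteq> 0}"
  using assms finite_representation[of B x]
  by (intro card_mono) (auto simp: representation_drop_coordinate)

lemma card_support_drop_coordinate_less:
  assumes "u \<in> B" "subspace W" "u \<in> W" "w \<in> W"
    and support: "\<And>w. w \<in> W \<Longrightarrow> card {b. representation B w b \<noteq> 0} \<le> N"
  shows "card {b. representation B (w - representation B w u *s u) b \<noteq> 0} < N"
proof -
  let ?p = "w - representation B w u *s u"
  have "{b. representation B (?p + u) b \<noteq> 0} = insert u {b. representation B ?p b \<noteq> 0}"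
    using independent_B span_B assms(1)
    by (auto simp: representation_add representation_basis representation_drop_coordinate)
  moreover have "u \<notin> {b. representation B ?p b \<noteq> 0}"
    using assms(1) by (simp add: representation_drop_coordinate)
  moreover have "?p + u \<in> W"
    using assms(2-4) by (intro subspace_add subspace_diff subspace_scale)
  ultimately show ?thesis
    using support[of "?p + u"] finite_representation[of B ?p] by simp
qed

lemma dim_le_of_card_support_le:
  assumes "finite T" "T \<subseteq> B" "subspace W" "W \<subseteq> span T"
    and "\<And>w. w \<in> W \<Longrightarrow> card {b. representation B w b \<noteq> 0} \<le> N"
  shows "dim W \<le> N"
  using assms
proof (induction T arbitrary: W N rule: finite_induct)
  case empty
  then show ?case using dim_le_card[of W "{}"] by simp
next
  case (insert u T)
  have u: "u \<in> B" and T: "T \<subseteq> B" using insert.prems(1) by auto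
  define p where "p x = x - representation B x u *s u" for x
  interpret p: Vector_Spaces.linear scale scale p
    unfolding p_def[abs_def] by (rule linear_drop_coordinate)
  have pW: "subspace (p ` W)"
    using insert.prems(2) by (rule p.subspace_image)
  have pW_span: "p ` W \<subseteq> span T"
    using insert.prems(3) drop_coordinate_in_span[OF T u] unfolding p_def by blast
  txt \<open>Project away the coordinate u. If u \<in> W, each p w has one nonzero coordinate
    fewer than p w + u \<in> W, and p loses at most one dimension; otherwise p is injective
    on W.\<close>
  show ?case
  proof (cases "u \<in> W")
    case True
    have less: "card {b. representation B (p w) b \<noteq> 0} < N" if "w \<in> W" for w
      unfolding p_def using u insert.prems(2) True that insert.prems(4)
      by (rule card_support_drop_coordinate_less)
    have "dim (p ` W) \<le> N - 1"
    proof (rule insert.IH[OF T pW pW_span])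
      fix x assume "x \<in> p ` W"
      then show "card {b. representation B x b \<noteq> 0} \<le> N - 1"
        using less by fastforce
    qed
    moreover have "dim W \<le> Suc (dim (p ` W))"
      using dim_le_Suc_dim_shift[OF pW_span[unfolded p_def[abs_def]] insert.hyps(1)]
      unfolding p_def[abs_def] .
    moreover have "0 < N"
      using less[OF True] by simp
    ultimately show ?thesis by linarith
  next
    case False
    have "dim (p ` W) \<le> N"
      using insert.IH[OF T pW pW_span] insert.prems(4)
        card_support_drop_coordinate_le[OF u] order_trans unfolding p_def by blast
    moreover have "inj_on p (span W)"
      unfolding span_eq_iff[THEN iffD2, OF insert.prems(2)] p_def[abs_def]
      by (rule inj_on_drop_coordinate[OF insert.prems(2) False])
    ultimately show ?thesis
      using dim_linear_image[OF p.linear_axioms] by simp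
  qed
qed

lemma exists_in_span_card_support_ge:
  assumes "finite S" "independent S"
  shows "\<exists>z\<in>span S. card S \<le> card {b. representation B z b \<noteq> 0}"
proof (rule ccontr)
  assume "\<not> ?thesis"
  then have less: "card {b. representation B z b \<noteq> 0} < card S" if "z \<in> span S" for z
    using that by (simp add: not_le)
  then have le: "card {b. representation B z b \<noteq> 0} \<le> card S - 1" if "z \<in> span S" for z
    using less[OF that] by linarith
  define T where "T = (\<Union>s\<in>S. {b. representation B s b \<noteq> 0})"
  have "finite T"
    using assms(1) finite_representation by (simp add: T_def)
  moreover have "T \<subseteq> B"
    using representation_ne_zero by (auto simp: T_def)
  moreover have "span S \<subseteq> span T"
  proof (rule span_minimal)
    show "S \<subseteq> span T"
      using in_span_iff_representation_support[OF \<open>T \<subseteq> B\<close>] by (auto simp: T_def)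
  qed simp
  ultimately have "dim (span S) \<le> card S - 1"
    using le by (intro dim_le_of_card_support_le) auto
  moreover have "dim (span S) = card S"
    using assms(2) by (rule dim_span_eq_card_independent)
  moreover have "0 < card S"
    using less[OF span_zero] by simp
  ultimately show False by linarith
qed

end

end

interpretation V: vector_space "fscale :: 'k::field \<Rightarrow> ('i \<Rightarrow> 'k) \<Rightarrow> ('i \<Rightarrow> 'k)"
  by (rule vector_space_fscale)

lemma fscale_apply: "fscale c f i = c * f i"
  by (simp add: fscale_def)

lemma sum_fun_apply: "(\<Sum>a\<in>A. f a) i = (\<Sum>a\<in>A. f a i)"
  by (induction A rule: infinite_finite_induct) auto

lemma supp_eq: "supp B x = {b. V.representation B x b \<noteq> 0}"
  using V.representation_ne_zero by (auto simp: supp_def)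

lemma finite_supp: "finite (supp B x)"
  by (simp add: supp_eq V.finite_representation)

lemma in_span_iff_supp_subset: "is_basis B \<Longrightarrow> T \<subseteq> B \<Longrightarrow> x \<in> V.span T \<longleftrightarrow> supp B x \<subseteq> T"
  unfolding is_basis_def supp_eq by (rule V.in_span_iff_representation_support) auto

lemma fmult_in_span:
  assumes "x \<in> V.span X" "y \<in> V.span Y"
    and XY: "\<And>a c. a \<in> X \<Longrightarrow> c \<in> Y \<Longrightarrow> fmult a c \<in> V.span T"
  shows "fmult x y \<in> V.span T"
  using assms(1)
proof (induction rule: V.span_induct_alt)
  case base
  have "fmult 0 y = 0" by (simp add: fmult_def fun_eq_iff)
  then show ?case using V.span_zero by metis
next
  case (step c a x)
  have "fmult a y \<in> V.span T"
    using assms(2)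
  proof (induction rule: V.span_induct_alt)
    case base
    have "fmult a 0 = 0" by (simp add: fmult_def fun_eq_iff)
    then show ?case using V.span_zero by metis
  next
    case (step d b y)
    have "fmult a (fscale d b + y) = fscale d (fmult a b) + fmult a y"
      by (simp add: fmult_def fscale_def fun_eq_iff algebra_simps)
    moreover have "fscale d (fmult a b) \<in> V.span T"
      using XY[OF \<open>a \<in> X\<close> \<open>b \<in> Y\<close>] by (rule V.span_scale)
    ultimately show ?case
      using step(2) V.span_add by metis
  qed
  moreover have "fmult (fscale c a + x) y = fscale c (fmult a y) + fmult x y"
    by (simp add: fmult_def fscale_def fun_eq_iff algebra_simps)
  ultimately show ?case
    using step(2) V.span_add V.span_scale by metis
qed

lemma cs_fmult_le:
  assumes B: "is_basis B" and k: "k_bounded k B"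
  shows "cs B (fmult x y) \<le> k * cs B x * cs B y"
proof -
  define T where "T = (\<Union>a\<in>supp B x. \<Union>c\<in>supp B y. supp B (fmult a c))"
  have "finite T"
    by (simp add: T_def finite_supp)
  have "T \<subseteq> B"
    by (auto simp: T_def supp_def)
  have "fmult x y \<in> V.span T"
  proof (rule fmult_in_span)
    show "x \<in> V.span (supp B x)" "y \<in> V.span (supp B y)"
      using in_span_iff_supp_subset[OF B] by (auto simp: supp_def)
    show "fmult a c \<in> V.span T" if "a \<in> supp B x" "c \<in> supp B y" for a c
      using in_span_iff_supp_subset[OF B \<open>T \<subseteq> B\<close>] that by (auto simp: T_def)
  qed
  then have "cs B (fmult x y) \<le> card T"
    unfolding cs_def using in_span_iff_supp_subset[OF B \<open>T \<subseteq> B\<close>] \<open>finite T\<close>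
    by (auto intro: card_mono)
  also have "\<dots> \<le> (\<Sum>a\<in>supp B x. \<Sum>c\<in>supp B y. card (supp B (fmult a c)))"
    unfolding T_def
    by (intro card_UN_le[THEN order_trans] sum_mono card_UN_le) (auto simp: finite_supp)
  also have "\<dots> \<le> (\<Sum>a\<in>supp B x. \<Sum>c\<in>supp B y. k)"
    using k by (intro sum_mono) (auto simp: k_bounded_def cs_def supp_def)
  also have "\<dots> = k * cs B x * cs B y"
    by (simp add: cs_def)
  finally show ?thesis .
qed

lemma inj_indicator_singleton: "inj (\<lambda>i. indicator {i} :: 'i \<Rightarrow> 'k::zero_neq_one)"
  by (rule injI) (metis indicator_simps(1) indicator_simps(2) singletonD singletonI zero_neq_one)

lemma independent_indicator_singletons:
  "V.independent (range (\<lambda>i. indicator {i} :: 'i \<Rightarrow> 'k::field))"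
  unfolding V.independent_explicit_module
proof (intro allI impI)
  fix t u and v :: "'i \<Rightarrow> 'k"
  assume t: "finite t" "t \<subseteq> range (\<lambda>i. indicator {i})"
    and zero: "(\<Sum>w\<in>t. fscale (u w) w) = 0" and "v \<in> t"
  then obtain p where p: "v = indicator {p}" by auto
  have coordinate: "w p = (if w = v then 1 else 0)" if "w \<in> t" for w
    using that t(2) p by (auto simp: indicator_def)
  have "(\<Sum>w\<in>t. fscale (u w) w) p = (\<Sum>w\<in>t. if w = v then u v else 0)"
    unfolding sum_fun_apply fscale_apply by (intro sum.cong) (simp_all add: coordinate)
  also have "\<dots> = u v"
    using t(1) \<open>v \<in> t\<close> by simp
  finally show "u v = 0"
    using zero by simp
qed

lemma span_indicator_singletons:
  assumes "finite (UNIV :: 'i set)"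
  shows "V.span (range (\<lambda>i. indicator {i} :: 'i \<Rightarrow> 'k::field)) = UNIV"
proof -
  have "x = (\<Sum>i\<in>UNIV. fscale (x i) (indicator {i}))" for x :: "'i \<Rightarrow> 'k"
    using assms by (simp add: fun_eq_iff sum_fun_apply fscale_apply indicator_def if_distrib)
  then show ?thesis
    by (metis (mono_tags) UNIV_eq_I V.span_base V.span_scale V.span_sum rangeI)
qed

lemma exists_supported_cs_ge:
  fixes B :: "('i \<Rightarrow> 'k::field) set"
  assumes B: "is_basis B" and "finite P"
  shows "\<exists>z. {i. z i \<noteq> 0} \<subseteq> P \<and> card P \<le> cs B z"
proof -
  let ?S = "(\<lambda>i. indicator {i} :: 'i \<Rightarrow> 'k) ` P"
  have "V.independent ?S"
    using independent_indicator_singletons by (rule V.independent_mono) auto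
  then obtain z where z: "z \<in> V.span ?S" "card ?S \<le> card {b. V.representation B z b \<noteq> 0}"
    using V.exists_in_span_card_support_ge[of B ?S] B \<open>finite P\<close> by (auto simp: is_basis_def)
  have "V.subspace {z. {i. z i \<noteq> 0} \<subseteq> P}"
    unfolding V.subspace_def by (auto simp: fscale_apply subset_iff) (metis add.left_neutral)
  then have "V.span ?S \<subseteq> {z. {i. z i \<noteq> 0} \<subseteq> P}"
    by (intro V.span_minimal) (auto simp: indicator_def split: if_splits)
  moreover have "card ?S = card P"
    by (rule card_image) (rule inj_on_subset[OF inj_indicator_singleton], simp)
  ultimately show ?thesis
    using z by (auto simp: cs_def supp_eq)
qed

lemma exists_supported_cs_gt:
  fixes B :: "('i \<Rightarrow> 'k::field) set"
  assumes "is_basis B" and "infinite J"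
  shows "\<exists>z. {i. z i \<noteq> 0} \<subseteq> J \<and> m < cs B z"
proof -
  obtain P where P: "finite P" "card P = Suc m" "P \<subseteq> J"
    using infinite_arbitrarily_large[OF \<open>infinite J\<close>] by blast
  then obtain z where "{i. z i \<noteq> 0} \<subseteq> P" "Suc m \<le> cs B z"
    using exists_supported_cs_ge[OF \<open>is_basis B\<close> \<open>finite P\<close>] by auto
  with P(3) show ?thesis
    by (intro exI[of _ z]) auto
qed

lemma exists_disjoint_family_infinite:
  assumes "infinite (UNIV :: 'a set)"
  shows "\<exists>J :: nat \<Rightarrow> 'a set. disjoint_family J \<and> (\<forall>n. infinite (J n))"
proof -
  obtain f :: "nat \<Rightarrow> 'a" where "inj f"
    using infinite_countable_subset[OF assms] by blast
  define g where "g = f \<circ> prod_encode"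
  have g: "inj g"
    unfolding g_def using \<open>inj f\<close> inj_prod_encode[of UNIV] by (rule inj_compose)
  define J where "J n = g ` ({n} \<times> UNIV)" for n
  have "disjoint_family J"
    using g by (auto simp: disjoint_family_on_def J_def inj_eq)
  moreover have "infinite (J n)" for n
    unfolding J_def using g by (auto simp: finite_image_iff inj_on_subset dest: finite_cartesian_productD2)
  ultimately show ?thesis by blast
qed

lemma not_bounded_basis_if_infinite:
  assumes "infinite (UNIV :: 'i set)"
  shows "\<not> bounded_basis (B :: ('i \<Rightarrow> 'k::field) set)"
proof
  assume "bounded_basis B"
  then obtain k where B: "is_basis B" and k: "k_bounded k B"
    by (auto simp: bounded_basis_def)
  obtain J :: "nat \<Rightarrow> 'i set" where J: "disjoint_family J" "\<And>n. infinite (J n)"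
    using exists_disjoint_family_infinite[OF assms] by blast
  obtain y :: "nat \<Rightarrow> 'i \<Rightarrow> 'k" where
    y: "\<And>n. {i. y n i \<noteq> 0} \<subseteq> J n" "\<And>n. n * k * cs B (indicator (J n)) < cs B (y n)"
  proof -
    have "\<forall>n. \<exists>z. {i. z i \<noteq> 0} \<subseteq> J n \<and> n * k * cs B (indicator (J n)) < cs B z"
      using exists_supported_cs_gt[OF B J(2)] by blast
    then show ?thesis
      using that by metis
  qed
  define Y where "Y i = y (SOME n. i \<in> J n) i" for i
  have glue: "fmult (indicator (J n)) Y = y n" for n
  proof
    fix i
    show "fmult (indicator (J n)) Y i = y n i"
    proof (cases "i \<in> J n")
      case True
      then have "(SOME n. i \<in> J n) = n"
        using J(1) by (intro some_equality) (auto simp: disjoint_family_on_def)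
      with True show ?thesis by (simp add: fmult_def Y_def)
    next
      case False
      then show ?thesis using y(1)[of n] by (auto simp: fmult_def)
    qed
  qed
  define M where "M = cs B Y"
  have "cs B (y M) \<le> k * cs B (indicator (J M)) * M"
    using cs_fmult_le[OF B k, of "indicator (J M)" Y] by (simp add: glue M_def)
  with y(2)[of M] show False by (simp add: mult_ac)
qed

lemma is_basis_if_span_card_le:
  fixes B :: "('i \<Rightarrow> 'k::field) set"
  assumes "finite (UNIV :: 'i set)" "V.span B = UNIV" "finite B" "card B \<le> card (UNIV :: 'i set)"
  shows "is_basis B"
proof -
  interpret F: finite_dimensional_vector_space fscale "range (\<lambda>i. indicator {i} :: 'i \<Rightarrow> 'k)"
    by unfold_locales
      (simp_all add: assms(1) independent_indicator_singletons span_indicator_singletons)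
  have "V.dim (UNIV :: ('i \<Rightarrow> 'k) set) = card (UNIV :: 'i set)"
    using F.dim_UNIV card_image[OF inj_indicator_singleton] by simp
  then have "V.independent B"
    using F.card_le_dim_spanning[of B UNIV] assms by auto
  with assms(2) show ?thesis
    by (simp add: is_basis_def)
qed

lemma strong_multiplicative_basis_if_finite:
  assumes "finite (UNIV :: 'i set)"
  shows "\<exists>B :: ('i \<Rightarrow> 'k::field) set. strong_multiplicative_basis B"
proof -
  define n where "n = card (UNIV :: 'i set)"
  obtain h :: "'i \<Rightarrow> nat" where h: "bij_betw h UNIV {0..<n}"
    using ex_bij_betw_finite_nat[OF assms] unfolding n_def by blast
  define C where "C m = (indicator {i. h i < m} :: 'i \<Rightarrow> 'k)" for m
  define B where "B = C ` {1..n}"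
  have C_span: "C m \<in> V.span B" if "m \<le> n" for m
  proof (cases "m = 0")
    case True
    then have "C m = 0" by (simp add: C_def fun_eq_iff)
    then show ?thesis using V.span_zero by metis
  next
    case False
    then show ?thesis using that by (intro V.span_base) (auto simp: B_def)
  qed
  have "indicator {i} = C (Suc (h i)) - C (h i)" for i
    using bij_betw_imp_inj_on[OF h] by (auto simp: C_def indicator_def fun_eq_iff less_Suc_eq inj_eq)
  moreover have "h i < n" for i
    using bij_betwE[OF h] by simp
  ultimately have "range (\<lambda>i. indicator {i}) \<subseteq> V.span B"
    using C_span by (auto intro!: V.span_diff simp: Suc_le_eq less_imp_le)
  then have "V.span B = UNIV"
    using span_indicator_singletons[OF assms] V.span_minimal[OF _ V.subspace_span] by blast
  moreover have "card B \<le> n"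
    unfolding B_def using card_image_le[of "{1..n}" C] by simp
  ultimately have "is_basis B"
    using assms by (intro is_basis_if_span_card_le) (auto simp: B_def n_def)
  moreover have "fmult (C m) (C m') = C (min m m')" for m m'
    by (auto simp: fmult_def C_def indicator_def fun_eq_iff)
  then have "\<forall>b\<in>B. \<forall>b'\<in>B. fmult b b' \<in> B"
    by (auto simp: B_def min_def)
  ultimately show ?thesis
    unfolding strong_multiplicative_basis_def by blast
qed

theorem theorem5p6:
  shows "(finite (UNIV :: 'i set) \<longrightarrow>
           (\<exists>B :: ('i \<Rightarrow> 'k::field) set. strong_multiplicative_basis B)) \<and>
         (infinite (UNIV :: 'i set) \<longrightarrow>
           \<not> (\<exists>B :: ('i \<Rightarrow> 'k::field) set. bounded_basis B))"
  using strong_multiplicative_basis_if_finite not_bounded_basis_if_infinite by blast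

end
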